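(* Let $G$ be a very well-covered graph with $V(G)=\{x_1,\ldots,x_h,y_1,\ldots,y_h\}$ such that $\{x_1,\ldots,x_h\}$ is a minimal vertex cover, $\{y_1,\ldots,y_h\}$ a maximal independent set and $\{x_i,y_i\}\in E(G)$ for all $i$. Let $s\ge1$, $e_1,\ldots,e_s\in E(G)$, and let $G'$ be the graph associated to $(I(G)^{s+1}:e_1\cdots e_s)$ as in the context. Let $u\in V(G)$ with $u^2\in(I(G)^{s+1}:e_1\cdots e_s)$. If $a\in N_{G'}([u]\setminus u)\cap V(G)$ and $b\in N_G[[u]]$, then $\{a,b\}\in E(G')$.
   Context: For $u\in\{x_i,y_i\}$, $[u]=\{x_i,y_i\}$, $[u]\setminus u$ denotes the other element of $[u]$, and $N_G[[u]]=N_G[x_i,y_i]$ is the closed neighbourhood $\{x_i,y_i\}\cup\{v\mid v$ adjacent in $G$ to $x_i$ or $y_i\}$; $N_{G'}(w)$ is the open neighbourhood of $w$ in $G'$. $I(G)$ is the edge ideal; edges are identified with the products of their endpoints. $G$ is very well-covered if it has no isolated vertices, all minimal vertex covers have the same size, and this size is $|V(G)|/2$. Even-connection: a sequence $p_0p_1\cdots p_{2k+1}$, $k\ge1$, with $\{p_r,p_{r+1}\}\in E(G)$ for all $r$, each $\{p_{2\ell+1},p_{2\ell+2}\}$ ($0\le\ell\le k-1$) equal to some $e_m$, each edge used among these at most as many times as it appears in $e_1,\dots,e_s$; then $p_0,p_{2k+1}$ (possibly equal) are even-connected. $(I(G)^{s+1}:e_1\cdots e_s)$ is minimally generated by $uv$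 with $\{u,v\}\in E(G)$ or $u,v$ even-connected; $G'$ is the graph whose edge ideal is the polarization of this ideal (each generator $u^2$ replaced by $uu^*$ with a new vertex $u^*$), so for $u\ne v\in V(G)$, $\{u,v\}\in E(G')$ iff $\{u,v\}\in E(G)$ or $u,v$ are even-connected. *)

theory Defs
  imports Main "HOL-Library.Multiset"
begin

definition simple_graph :: "'a set \<Rightarrow> ('a \<Rightarrow> 'a \<Rightarrow> bool) \<Rightarrow> bool" where
  "simple_graph V E \<longleftrightarrow> finite V \<and>
     (\<forall>a b. E a b \<longrightarrow> a \<in> V \<and> b \<in> V \<and> a \<noteq> b \<and> E b a)"

definition vertex_cover :: "'a set \<Rightarrow> ('a \<Rightarrow> 'a \<Rightarrow> bool) \<Rightarrow> 'a set \<Rightarrow> bool" where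
  "vertex_cover V E C \<longleftrightarrow> C \<subseteq> V \<and> (\<forall>a\<in>V. \<forall>b\<in>V. E a b \<longrightarrow> a \<in> C \<or> b \<in> C)"

definition minimal_vertex_cover :: "'a set \<Rightarrow> ('a \<Rightarrow> 'a \<Rightarrow> bool) \<Rightarrow> 'a set \<Rightarrow> bool" where
  "minimal_vertex_cover V E C \<longleftrightarrow> vertex_cover V E C \<and> (\<forall>D. D \<subset> C \<longrightarrow> \<not> vertex_cover V E D)"

definition independent_set :: "'a set \<Rightarrow> ('a \<Rightarrow> 'a \<Rightarrow> bool) \<Rightarrow> 'a set \<Rightarrow> bool" where
  "independent_set V E S \<longleftrightarrow> S \<subseteq> V \<and> (\<forall>a\<in>S. \<forall>b\<in>S. \<not> E a b)"

definition maximal_independent_set :: "'a set \<Rightarrow> ('a \<Rightarrow> 'a \<Rightarrow> bool) \<Rightarrow> 'a set \<Rightarrow> bool" where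
  "maximal_independent_set V E S \<longleftrightarrow> independent_set V E S \<and>
     (\<forall>T. independent_set V E T \<and> S \<subseteq> T \<longrightarrow> T = S)"

definition very_well_covered :: "'a set \<Rightarrow> ('a \<Rightarrow> 'a \<Rightarrow> bool) \<Rightarrow> bool" where
  "very_well_covered V E \<longleftrightarrow> (\<forall>v\<in>V. \<exists>w\<in>V. E v w) \<and>
     (\<forall>C. minimal_vertex_cover V E C \<longrightarrow> 2 * card C = card V)"

(* Monomials in k[V] are multisets of variables; the edge {p,q} is the monomial pq.
   A monomial m lies in (I(G)^(s+1) : e_1...e_s) (s = length es) iff m*e_1*...*e_s lies in
   the monomial ideal I(G)^(s+1), i.e. iff it is divisible by a product of s+1 edges. *)
definition edge_prod :: "('a \<times> 'a) list \<Rightarrow> 'a multiset" where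
  "edge_prod es = (\<Sum>(p,q)\<leftarrow>es. {#p, q#})"

definition in_power_colon :: "('a \<Rightarrow> 'a \<Rightarrow> bool) \<Rightarrow> ('a \<times> 'a) list \<Rightarrow> 'a multiset \<Rightarrow> bool" where
  "in_power_colon E es m \<longleftrightarrow>
     (\<exists>fs. length fs = Suc (length es) \<and> (\<forall>(p,q)\<in>set fs. E p q) \<and>
           edge_prod fs \<subseteq># m + edge_prod es)"

end

theory Submission
  imports Defs
begin

(* The hypothesis on u says that u is even-connected to itself through the edges e_1, ..., e_s,
   and a is joined to w in G' by a walk alternating between edges of G and edges among the e_m.
   Very well-coveredness together with the perfect matching {x_j, y_j} gives the key fact that
   every neighbour of u is adjacent to every neighbour of w.  Hence the closed walk at u may be
   restarted at any neighbour of w, and following the walk from a towards w we either meet an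
   edge of the closed walk, or reach the vertex just before w; in both cases we switch to the
   closed walk and arrive at u, using each e_m no more often than allowed.  By the key fact the
   endpoint u of the resulting walk, resp. the endpoint w of the original one, may be replaced by
   any neighbour of w, resp. of u. *)

lemma minimal_vertex_cover_Diff_maximal_independent_set:
  assumes "maximal_independent_set V E M"
  shows "minimal_vertex_cover V E (V - M)"
proof -
  have M: "M \<subseteq> V" "\<forall>p\<in>M. \<forall>q\<in>M. \<not> E p q"
    and max: "\<And>T. independent_set V E T \<Longrightarrow> M \<subseteq> T \<Longrightarrow> T = M"
    using assms unfolding maximal_independent_set_def independent_set_def by blast+
  have "\<not> vertex_cover V E D" if "D \<subset> V - M" for D
  proof
    assume cover: "vertex_cover V E D"
    obtain v where v: "v \<in> V - M" "v \<notin> D" using \<open>D \<subset> V - M\<close> by blast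
    have "independent_set V E (insert v M)"
      using cover M v \<open>D \<subset> V - M\<close> unfolding vertex_cover_def independent_set_def by blast
    then show False using max v by blast
  qed
  moreover have "vertex_cover V E (V - M)" using M unfolding vertex_cover_def by blast
  ultimately show ?thesis unfolding minimal_vertex_cover_def by blast
qed

lemma ex_maximal_independent_set_superset:
  assumes "finite V" "independent_set V E S"
  shows "\<exists>M. maximal_independent_set V E M \<and> S \<subseteq> M"
proof -
  let ?A = "{T. independent_set V E T \<and> S \<subseteq> T}"
  have "?A \<subseteq> Pow V" by (auto simp: independent_set_def)
  then have "finite ?A" using assms(1) by (meson finite_Pow_iff finite_subset)
  then obtain M where "M \<in> ?A" "\<forall>T\<in>?A. M \<le> T \<longrightarrow> M = T"
    using finite_has_maximal2[of ?A S] assms(2) by blast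
  then show ?thesis unfolding maximal_independent_set_def by blast
qed

lemma card_independent_set_avoiding_matching_edge:
  assumes "V = x ` {1..h} \<union> y ` {1..h}" and matching: "\<forall>j\<in>{1..h}. E (x j) (y j)"
    and indep: "independent_set V E M" and "k \<in> {1..h}" "x k \<notin> M" "y k \<notin> M"
  shows "card M < h"
proof -
  have "\<forall>m\<in>M. \<exists>j\<in>{1..h} - {k}. m = x j \<or> m = y j"
  proof
    fix m assume "m \<in> M"
    then obtain j where "j \<in> {1..h}" "m = x j \<or> m = y j"
      using assms(1) indep unfolding independent_set_def by blast
    moreover have "j \<noteq> k" using calculation(2) \<open>m \<in> M\<close> assms(5,6) by blast
    ultimately show "\<exists>j\<in>{1..h} - {k}. m = x j \<or> m = y j" by blast
  qed
  then obtain idx where idx: "\<forall>m\<in>M. idx m \<in> {1..h} - {k} \<and> (m = x (idx m) \<or> m = y (idx m))"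
    by metis
  have "inj_on idx M"
  proof
    fix m m' assume mm: "m \<in> M" "m' \<in> M" "idx m = idx m'"
    show "m = m'"
    proof (rule ccontr)
      assume "m \<noteq> m'"
      then have "E m m' \<or> E m' m" using idx mm matching by (metis DiffD1)
      then show False using indep mm unfolding independent_set_def by blast
    qed
  qed
  then have "card M \<le> card ({1..h} - {k})"
    using idx by (intro card_inj_on_le) auto
  then show ?thesis using assms(4) by (simp; linarith)
qed

(* Otherwise {p, q} extends to a maximal independent set M, whose complement is a minimal vertex
   cover; so card M = h, although M contains neither x k nor y k. *)
lemma very_well_covered_matching_neighbours_adjacent:
  assumes graph: "simple_graph V E" and V_eq: "V = x ` {1..h} \<union> y ` {1..h}"
    and card_V: "card V = 2 * h" and vwc: "very_well_covered V E"
    and matching: "\<forall>j\<in>{1..h}. E (x j) (y j)"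
    and "k \<in> {1..h}" "E p (x k)" "E q (y k)"
  shows "E p q"
proof (rule ccontr)
  assume "\<not> E p q"
  then have "independent_set V E {p, q}"
    using assms(7,8) graph unfolding simple_graph_def independent_set_def by blast
  then obtain M where M: "maximal_independent_set V E M" "{p, q} \<subseteq> M"
    using ex_maximal_independent_set_superset graph unfolding simple_graph_def by blast
  have "finite V" using graph unfolding simple_graph_def by blast
  have "M \<subseteq> V" using M(1) unfolding maximal_independent_set_def independent_set_def by blast
  have "2 * card (V - M) = card V"
    using vwc minimal_vertex_cover_Diff_maximal_independent_set[OF M(1)]
    unfolding very_well_covered_def by blast
  then have "card M = h"
    using card_Diff_subset[OF finite_subset[OF \<open>M \<subseteq> V\<close> \<open>finite V\<close>] \<open>M \<subseteq> V\<close>]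
      card_mono[OF \<open>finite V\<close> \<open>M \<subseteq> V\<close>] card_V by linarith
  moreover have "x k \<notin> M" "y k \<notin> M"
    using M assms(7,8) unfolding maximal_independent_set_def independent_set_def by blast+
  ultimately show False
    using card_independent_set_avoiding_matching_edge[OF V_eq matching _ assms(6)] M(1)
    unfolding maximal_independent_set_def by fastforce
qed

(* For U \<noteq> {#} this says that p and q are
   even-connected through the edges U; for U = {#} it says that p and q are adjacent. *)
inductive alt_walk :: "('a \<Rightarrow> 'a \<Rightarrow> bool) \<Rightarrow> 'a multiset multiset \<Rightarrow> 'a \<Rightarrow> 'a \<Rightarrow> bool"
  for E where
  adjacent: "E p q \<Longrightarrow> alt_walk E {#} p q"
| step: "E p c \<Longrightarrow> E c d \<Longrightarrow> alt_walk E U d q \<Longrightarrow> alt_walk E (add_mset {#c, d#} U) p q"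

lemma alt_walk_snoc:
  "alt_walk E U p d \<Longrightarrow> E d c \<Longrightarrow> E c q \<Longrightarrow> alt_walk E (add_mset {#c, d#} U) p q"
proof (induction arbitrary: c q rule: alt_walk.induct)
  case (adjacent p d)
  then show ?case using alt_walk.step[OF _ _ alt_walk.adjacent] by (metis add_mset_commute)
next
  case (step p c' d' U d)
  then show ?case using alt_walk.step by (metis add_mset_commute)
qed

lemma alt_walk_sym:
  assumes "symp E" "alt_walk E U p q"
  shows "alt_walk E U q p"
  using assms(2) by induction (auto intro: alt_walk.adjacent alt_walk_snoc sympD[OF assms(1)])

lemma alt_walk_restart:
  assumes "symp E" "alt_walk E U p q" "\<forall>r. E p r \<longrightarrow> E r t"
  shows "alt_walk E U t q"
  using assms(2)
proof cases
  case adjacent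
  then show ?thesis using assms by (auto intro: alt_walk.adjacent sympD)
next
  case (step c d U')
  then show ?thesis using assms by (auto intro: alt_walk.step sympD)
qed

lemma alt_walk_retarget:
  assumes "symp E" "alt_walk E U p q" "\<forall>r. E q r \<longrightarrow> E r t"
  shows "alt_walk E U p t"
  using alt_walk_sym alt_walk_restart assms by metis

lemma alt_walk_leave_through_edge:
  assumes "alt_walk E U p q" "symp E" "{#c, d#} \<in># U"
  shows "\<exists>d' U'. add_mset {#c, d'#} U' \<subseteq># U \<and> E c d' \<and>
    (alt_walk E U' d' q \<or> alt_walk E U' d' p)"
  using assms(1,3)
proof (induction arbitrary: d rule: alt_walk.induct)
  case (adjacent p q)
  then show ?case by simp
next
  case (step p c0 d0 U q)
  show ?case
  proof (cases "{#c, d#} = {#c0, d0#}")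
    case True
    have "c \<in># {#c0, d0#}" unfolding True[symmetric] by simp
    then consider "c = c0" | "c = d0" by force
    then show ?thesis
    proof cases
      case 1
      then show ?thesis using step.hyps(2,3) by blast
    next
      case 2
      have "{#{#c, c0#}#} \<subseteq># add_mset {#c0, d0#} U" using 2 by (simp add: add_mset_commute)
      moreover have "E c c0" using 2 step.hyps(2) sympD[OF assms(2)] by blast
      moreover have "alt_walk E {#} c0 p" using step.hyps(1) sympD[OF assms(2)] alt_walk.adjacent by metis
      ultimately show ?thesis by blast
    qed
  next
    case False
    then have "{#c, d#} \<in># U" using step.prems by simp
    then obtain d' U' where U': "add_mset {#c, d'#} U' \<subseteq># U" "E c d'"
      "alt_walk E U' d' q \<or> alt_walk E U' d' d0"
      using step.IH by blast
    from U'(3) show ?thesis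
    proof
      assume "alt_walk E U' d' q"
      moreover have "add_mset {#c, d'#} U' \<subseteq># add_mset {#c0, d0#} U"
        using U'(1) subset_mset.order_trans by fastforce
      ultimately show ?thesis using U'(2) by blast
    next
      assume "alt_walk E U' d' d0"
      then have "alt_walk E (add_mset {#c0, d0#} U') d' p"
        using alt_walk_snoc step.hyps(1,2) sympD[OF assms(2)] by metis
      moreover have "add_mset {#c, d'#} (add_mset {#c0, d0#} U') \<subseteq># add_mset {#c0, d0#} U"
        using U'(1) by (simp add: add_mset_commute)
      ultimately show ?thesis using U'(2) by blast
    qed
  qed
qed

lemma alt_walk_reroute:
  assumes "alt_walk E R a w" "R \<subseteq># B" "U \<subseteq># B" "alt_walk E U u u" "symp E"
    and "\<forall>t. E t w \<longrightarrow> alt_walk E U t u"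
  shows "\<exists>X. X \<subseteq># B \<and> alt_walk E X a u"
  using assms(1,2,3,6)
proof (induction arbitrary: B rule: alt_walk.induct)
  case (adjacent a w)
  then show ?case by blast
next
  case (step a c d R w)
  show ?case
  proof (cases "{#c, d#} \<in># U")
    case True
    then obtain d' U' where "add_mset {#c, d'#} U' \<subseteq># U" "E c d'" "alt_walk E U' d' u"
      using alt_walk_leave_through_edge[OF assms(4,5)] by blast
    then show ?thesis
      using alt_walk.step[of E a c] step.hyps(1) step.prems(2) subset_mset.order_trans by blast
  next
    case False
    let ?B' = "B - {#{#c, d#}#}"
    have "U \<subseteq># ?B'" using False step.prems(2)
      by (metis add_mset_remove_trivial_If inter_add_left1 subset_mset.inf.absorb_iff2)
    moreover have "R \<subseteq># ?B'" using step.prems(1) by (simp add: insert_subset_eq_iff)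
    ultimately obtain X where "X \<subseteq># ?B'" "alt_walk E X d u" using step.IH step.prems(3) by blast
    then have "add_mset {#c, d#} X \<subseteq># B" "alt_walk E (add_mset {#c, d#} X) a u"
      using step.hyps(1,2) step.prems(1) by (auto simp: insert_subset_eq_iff intro: alt_walk.step)
    then show ?thesis by blast
  qed
qed

lemma alt_walk_to_closed_neighbourhood:
  assumes sym: "symp E" and adj: "\<forall>p q. E u p \<longrightarrow> E w q \<longrightarrow> E p q"
    and U: "alt_walk E U u u" "U \<subseteq># B" and R: "alt_walk E R a w" "R \<subseteq># B"
    and b: "b = u \<or> b = w \<or> E u b \<or> E w b"
  shows "\<exists>Y. Y \<subseteq># B \<and> alt_walk E Y a b"
proof -
  have "alt_walk E U t u" if "E t w" for t
  proof (rule alt_walk_restart[OF sym U(1)])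
    show "\<forall>r. E u r \<longrightarrow> E r t" using adj sympD[OF sym that] by blast
  qed
  then obtain X where X: "X \<subseteq># B" "alt_walk E X a u"
    using alt_walk_reroute[OF R U(2,1) sym] by blast
  from b show ?thesis
  proof (elim disjE)
    assume "E u b"
    then have "\<forall>r. E w r \<longrightarrow> E r b" using adj sympD[OF sym] by blast
    then show ?thesis using R alt_walk_retarget[OF sym R(1)] by blast
  next
    assume "E w b"
    then have "\<forall>r. E u r \<longrightarrow> E r b" using adj by blast
    then show ?thesis using X alt_walk_retarget[OF sym X(2)] by blast
  qed (use R X in auto)
qed

definition edge_mset :: "('a \<times> 'a) list \<Rightarrow> 'a multiset multiset" where
  "edge_mset es = image_mset (\<lambda>(p, q). {#p, q#}) (mset es)"

definition edge_monomial :: "('a \<Rightarrow> 'a \<Rightarrow> bool) \<Rightarrow> 'a multiset \<Rightarrow> bool" where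
  "edge_monomial E m \<longleftrightarrow> (\<exists>c d. m = {#c, d#} \<and> E c d)"

lemma edge_prod_eq_sum_edge_mset: "edge_prod es = \<Sum>\<^sub># (edge_mset es)"
  unfolding edge_prod_def edge_mset_def by (induction es) auto

lemma size_edge_prod: "size (edge_prod es) = 2 * length es"
  unfolding edge_prod_def by (induction es) auto

lemma edge_monomial_edge_mset:
  "\<forall>(c, d)\<in>set es. E c d \<Longrightarrow> \<forall>m\<in>#edge_mset es. edge_monomial E m"
  unfolding edge_mset_def edge_monomial_def by fastforce

lemma edge_monomial_at_vertex:
  assumes "symp E" "\<forall>m\<in>#Q. edge_monomial E m" "c \<in># \<Sum>\<^sub># Q"
  shows "\<exists>d Q'. Q = add_mset {#c, d#} Q' \<and> E c d"
proof -
  obtain m where m: "m \<in># Q" "c \<in># m" using assms(3) by auto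
  then obtain c' d' where "m = {#c', d'#}" "E c' d'"
    using assms(2) unfolding edge_monomial_def by blast
  then obtain d where "m = {#c, d#}" "E c d"
    using m(2) assms(1) by (auto simp: add_mset_commute dest: sympD)
  then show ?thesis using m(1) by (metis insert_DiffM)
qed

lemma alt_walk_in_power_colon:
  assumes "alt_walk E U p q" "U \<subseteq># edge_mset es" "\<forall>(c, d)\<in>set es. E c d"
  shows "in_power_colon E es {#p, q#}"
  using assms
proof (induction arbitrary: es rule: alt_walk.induct)
  case (adjacent p q)
  then have "length ((p, q) # es) = Suc (length es)" "\<forall>(c, d)\<in>set ((p, q) # es). E c d"
    "edge_prod ((p, q) # es) = {#p, q#} + edge_prod es"
    by (auto simp: edge_prod_def)
  then show ?case unfolding in_power_colon_def by (metis subset_mset.order_refl)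
next
  case (step p c d U q)
  obtain e where e: "e \<in> set es" "(case e of (a, b) \<Rightarrow> {#a, b#}) = {#c, d#}"
    using step.prems(1) unfolding edge_mset_def by (auto simp: insert_subset_eq_iff)
  define es' where "es' = remove1 e es"
  have "mset es = add_mset e (mset es')" using e(1) by (simp add: es'_def)
  then have es: "edge_mset es = add_mset {#c, d#} (edge_mset es')" "length es = Suc (length es')"
    using e(2) by (auto simp: edge_mset_def dest: arg_cong[of _ _ size])
  have "U \<subseteq># edge_mset es'" using step.prems(1) es(1) by simp
  moreover have "\<forall>(c, d)\<in>set es'. E c d" using step.prems(2) by (auto simp: es'_def dest: notin_set_remove1)
  ultimately obtain fs where fs: "length fs = Suc (length es')" "\<forall>(c, d)\<in>set fs. E c d"
    "edge_prod fs \<subseteq># {#d, q#} + edge_prod es'"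
    using step.IH unfolding in_power_colon_def by blast
  have "edge_prod ((p, c) # fs) = add_mset p (add_mset c (edge_prod fs))"
    by (simp add: edge_prod_def)
  also have "\<dots> \<subseteq># add_mset p (add_mset c ({#d, q#} + edge_prod es'))" using fs(3) by simp
  also have "\<dots> = {#p, q#} + edge_prod es"
    using es(1) by (simp add: edge_prod_eq_sum_edge_mset add_mset_commute)
  finally have "edge_prod ((p, c) # fs) \<subseteq># {#p, q#} + edge_prod es" .
  moreover have "\<forall>(a, b)\<in>set ((p, c) # fs). E a b" using fs(2) step.hyps(1) by auto
  ultimately show ?case unfolding in_power_colon_def using fs(1) es(2) by (metis length_Cons)
qed

lemma alt_walk_of_sum_edge_monomials:
  assumes "symp E" "\<forall>m\<in>#F. edge_monomial E m" "\<forall>m\<in>#Q. edge_monomial E m"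
    and "size F = Suc (size Q)" "\<Sum>\<^sub># F = {#p, q#} + \<Sum>\<^sub># Q"
  shows "\<exists>U. U \<subseteq># Q \<and> alt_walk E U p q"
  using assms(2-5)
proof (induction "size Q" arbitrary: F Q p rule: less_induct)
  case less
  have "p \<in># \<Sum>\<^sub># F" using less.prems(4) by simp
  then obtain c F' where F: "F = add_mset {#p, c#} F'" "E p c"
    using edge_monomial_at_vertex[OF assms(1) less.prems(1)] by blast
  have sum: "add_mset c (\<Sum>\<^sub># F') = add_mset q (\<Sum>\<^sub># Q)" using less.prems(4) F(1) by simp
  show ?case
  proof (cases "c = q")
    case True
    then have "alt_walk E {#} p q" using F(2) by (simp add: alt_walk.adjacent)
    then show ?thesis by (intro exI[of _ "{#}"]) simp
  next
    case False
    then have "c \<in># \<Sum>\<^sub># Q" using sum by (metis insert_noteq_member)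
    then obtain d Q' where Q: "Q = add_mset {#c, d#} Q'" "E c d"
      using edge_monomial_at_vertex[OF assms(1) less.prems(2)] by blast
    have "\<Sum>\<^sub># F' = {#d, q#} + \<Sum>\<^sub># Q'" using sum Q(1) by (simp add: add_mset_commute)
    moreover have "size Q' < size Q" "size F' = Suc (size Q')"
      using F(1) Q(1) less.prems(3) by simp_all
    moreover have "\<forall>m\<in>#F'. edge_monomial E m" "\<forall>m\<in>#Q'. edge_monomial E m"
      using less.prems(1,2) F(1) Q(1) by simp_all
    ultimately obtain U where U: "U \<subseteq># Q'" "alt_walk E U d q"
      using less.hyps by blast
    have "add_mset {#c, d#} U \<subseteq># Q" using U(1) Q(1) by simp
    moreover have "alt_walk E (add_mset {#c, d#} U) p q" using F(2) Q(2) U(2) by (rule alt_walk.step)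
    ultimately show ?thesis by blast
  qed
qed

lemma in_power_colon_iff_alt_walk:
  assumes "symp E" "\<forall>(c, d)\<in>set es. E c d"
  shows "in_power_colon E es {#p, q#} \<longleftrightarrow> (\<exists>U. U \<subseteq># edge_mset es \<and> alt_walk E U p q)"
proof
  assume "in_power_colon E es {#p, q#}"
  then obtain fs where fs: "length fs = Suc (length es)" "\<forall>(c, d)\<in>set fs. E c d"
    "edge_prod fs \<subseteq># {#p, q#} + edge_prod es"
    unfolding in_power_colon_def by blast
  have "size (edge_prod fs) = size ({#p, q#} + edge_prod es)"
    using fs(1) by (simp add: size_edge_prod)
  then have "edge_prod fs = {#p, q#} + edge_prod es"
    using fs(3) mset_subset_size subset_mset.le_less by (metis less_irrefl)
  then have "\<Sum>\<^sub># (edge_mset fs) = {#p, q#} + \<Sum>\<^sub># (edge_mset es)"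
    by (simp add: edge_prod_eq_sum_edge_mset)
  moreover have "size (edge_mset fs) = Suc (size (edge_mset es))"
    using fs(1) by (simp add: edge_mset_def)
  ultimately show "\<exists>U. U \<subseteq># edge_mset es \<and> alt_walk E U p q"
    using alt_walk_of_sum_edge_monomials[OF assms(1) edge_monomial_edge_mset[OF fs(2)]
        edge_monomial_edge_mset[OF assms(2)]] by blast
next
  assume "\<exists>U. U \<subseteq># edge_mset es \<and> alt_walk E U p q"
  then obtain U where "U \<subseteq># edge_mset es" "alt_walk E U p q" by (elim exE conjE)
  then show "in_power_colon E es {#p, q#}" using assms(2) by (intro alt_walk_in_power_colon)
qed

theorem lemma4p4:
  fixes V :: "'a set" and E :: "'a \<Rightarrow> 'a \<Rightarrow> bool"
    and x y :: "nat \<Rightarrow> 'a" and h :: nat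
    and es :: "('a \<times> 'a) list"
    and i :: nat and u w a b :: 'a
  assumes graph: "simple_graph V E"
    and V_def: "V = x ` {1..h} \<union> y ` {1..h}"
    and distinct: "card V = 2 * h"
    and vwc: "very_well_covered V E"
    and xcover: "minimal_vertex_cover V E (x ` {1..h})"
    and yindep: "maximal_independent_set V E (y ` {1..h})"
    and matching: "\<forall>j\<in>{1..h}. E (x j) (y j)"
    and s_pos: "length es \<ge> 1"
    and es_edges: "\<forall>(p,q)\<in>set es. E p q"
    and i_range: "i \<in> {1..h}"
    and u_w: "(u = x i \<and> w = y i) \<or> (u = y i \<and> w = x i)"
    and u_sq: "in_power_colon E es {#u, u#}"
    and a_nbr: "a \<in> V \<and> a \<noteq> w \<and> in_power_colon E es {#w, a#}"
    and b_nbr: "b \<in> {x i, y i} \<union> {v. E (x i) v \<or> E (y i) v}"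
  shows "in_power_colon E es {#a, b#}"
proof -
  have sym: "symp E" using graph unfolding simple_graph_def by (blast intro: sympI)
  note colon_iff = in_power_colon_iff_alt_walk[OF sym es_edges]
  note neighbours_adjacent =
    very_well_covered_matching_neighbours_adjacent[OF graph V_def distinct vwc matching i_range]
  have adj: "\<forall>p q. E u p \<longrightarrow> E w q \<longrightarrow> E p q"
  proof (intro allI impI)
    fix p q assume pq: "E u p" "E w q"
    from u_w show "E p q"
    proof (elim disjE conjE)
      assume "u = x i" "w = y i"
      then show ?thesis using pq neighbours_adjacent sympD[OF sym] by metis
    next
      assume "u = y i" "w = x i"
      then show ?thesis using pq neighbours_adjacent sympD[OF sym] by metis
    qed
  qed
  obtain U where U: "U \<subseteq># edge_mset es" "alt_walk E U u u" using u_sq colon_iff by blast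
  obtain R where R: "R \<subseteq># edge_mset es" "alt_walk E R a w"
    using a_nbr colon_iff alt_walk_sym[OF sym] by blast
  have "b = u \<or> b = w \<or> E u b \<or> E w b" using b_nbr u_w by auto
  then show ?thesis
    using alt_walk_to_closed_neighbourhood[OF sym adj U(2,1) R(2,1)] colon_iff by blast
qed

end
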